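(* Let $G$ be a graph and $X\subseteq V(G)$ a vertex cover of $G$. For any set $\mathcal{B}$ of closed neighborhoods of $G$, NCTD$(\mathcal{B})\le 2^{|X|+1}+|X|$.
   Context: $N[v]$ is the closed neighborhood of $v$. A teaching map for a set $\mathcal{B}$ of closed neighborhoods assigns to each $B\in\mathcal{B}$ a set $T(B)\subseteq V(G)$. A vertex $w$ distinguishes $B,B'$ if $w$ lies in exactly one of $B,B'$. $T$ is non-clashing if for all distinct $B,B'\in\mathcal{B}$ some $w\in T(B)\cup T(B')$ distinguishes $B$ and $B'$; its size is $\max_{B\in\mathcal{B}}|T(B)|$. NCTD$(\mathcal{B})$ is the minimum size of a non-clashing teaching map for $\mathcal{B}$. *)

theory Defs
  imports Main
begin

definition graph :: "'a set \<Rightarrow> ('a \<Rightarrow> 'a \<Rightarrow> bool) \<Rightarrow> bool" where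
  "graph V E \<longleftrightarrow> finite V \<and> (\<forall>u v. E u v \<longrightarrow> u \<in> V \<and> v \<in> V)
     \<and> (\<forall>u v. E u v \<longrightarrow> E v u) \<and> (\<forall>v. \<not> E v v)"

definition vertex_cover :: "'a set \<Rightarrow> ('a \<Rightarrow> 'a \<Rightarrow> bool) \<Rightarrow> 'a set \<Rightarrow> bool" where
  "vertex_cover V E X \<longleftrightarrow> X \<subseteq> V \<and> (\<forall>u v. E u v \<longrightarrow> u \<in> X \<or> v \<in> X)"

definition closed_nbhd :: "'a set \<Rightarrow> ('a \<Rightarrow> 'a \<Rightarrow> bool) \<Rightarrow> 'a \<Rightarrow> 'a set" where
  "closed_nbhd V E v = insert v {u \<in> V. E v u}"

definition distinguishes :: "'a \<Rightarrow> 'a set \<Rightarrow> 'a set \<Rightarrow> bool" where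
  "distinguishes w B B' \<longleftrightarrow> (w \<in> B \<longleftrightarrow> w \<notin> B')"

definition non_clashing :: "'a set \<Rightarrow> 'a set set \<Rightarrow> ('a set \<Rightarrow> 'a set) \<Rightarrow> bool" where
  "non_clashing V \<B> T \<longleftrightarrow> (\<forall>B\<in>\<B>. T B \<subseteq> V) \<and>
     (\<forall>B\<in>\<B>. \<forall>B'\<in>\<B>. B \<noteq> B' \<longrightarrow> (\<exists>w\<in>T B \<union> T B'. distinguishes w B B'))"

definition teaching_size :: "'a set set \<Rightarrow> ('a set \<Rightarrow> 'a set) \<Rightarrow> nat" where
  "teaching_size \<B> T = Max (insert 0 ((\<lambda>B. card (T B)) ` \<B>))"

definition NCTD :: "'a set \<Rightarrow> 'a set set \<Rightarrow> nat" where
  "NCTD V \<B> = (LEAST k. \<exists>T. non_clashing V \<B> T \<and> teaching_size \<B> T = k)"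

end

theory Submission
  imports Defs
begin

text \<open>Outside a vertex cover X the vertices form an independent set, so the closed
  neighbourhood of a vertex v outside X meets the complement of X only in v, and v
  separates N[v] from every other such neighbourhood. Hence a teaching set for B only has
  to contain its own centre and one vertex separating B from each of the at most |X|
  neighbourhoods N[x] with x in X, which gives the sharper bound |X| + 1.\<close>

lemma NCTD_le_of_non_clashing:
  assumes "non_clashing V \<B> T" and "finite \<B>" and "\<And>B. B \<in> \<B> \<Longrightarrow> card (T B) \<le> k"
  shows "NCTD V \<B> \<le> k"
proof -
  have "teaching_size \<B> T \<le> k"
    unfolding teaching_size_def using assms(2,3) by (subst Max_le_iff) auto
  moreover have "NCTD V \<B> \<le> teaching_size \<B> T"
    unfolding NCTD_def using assms(1) by (intro Least_le) blast
  ultimately show ?thesis by linarith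
qed

definition distinguisher :: "'a set \<Rightarrow> 'a set \<Rightarrow> 'a set \<Rightarrow> 'a" where
  "distinguisher V B C = (SOME w. w \<in> V \<and> distinguishes w B C)"

lemma distinguisher:
  assumes "B \<subseteq> V" and "C \<subseteq> V" and "B \<noteq> C"
  shows "distinguisher V B C \<in> V" and "distinguishes (distinguisher V B C) B C"
proof -
  have "\<exists>w. w \<in> V \<and> distinguishes w B C"
    using assms unfolding distinguishes_def by blast
  then have "distinguisher V B C \<in> V \<and> distinguishes (distinguisher V B C) B C"
    unfolding distinguisher_def by (rule someI_ex)
  then show "distinguisher V B C \<in> V" and "distinguishes (distinguisher V B C) B C"
    by blast+
qed

lemma non_clashing_exceptional:
  assumes "\<B> \<subseteq> Pow V" and "\<C> \<subseteq> \<B>"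
    and p_in: "\<And>B. B \<in> \<B> \<Longrightarrow> p B \<in> V"
    and p_dist: "\<And>B B'. B \<in> \<B> - \<C> \<Longrightarrow> B' \<in> \<B> - \<C> \<Longrightarrow> B \<noteq> B' \<Longrightarrow>
      distinguishes (p B) B B'"
  shows "non_clashing V \<B> (\<lambda>B. insert (p B) (distinguisher V B ` (\<C> - {B})))"
    (is "non_clashing V \<B> ?T")
proof -
  have separator: "distinguisher V B C \<in> V" "distinguishes (distinguisher V B C) B C"
    if "B \<in> \<B>" "C \<in> \<B>" "B \<noteq> C" for B C
  proof -
    have "B \<subseteq> V" "C \<subseteq> V"
      using that(1,2) assms(1) by auto
    then show "distinguisher V B C \<in> V" "distinguishes (distinguisher V B C) B C"
      using \<open>B \<noteq> C\<close> by (simp_all add: distinguisher)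
  qed
  show ?thesis
    unfolding non_clashing_def
  proof (intro conjI ballI impI)
    fix B assume "B \<in> \<B>"
    then have "p B \<in> V" and "distinguisher V B ` (\<C> - {B}) \<subseteq> V"
      using p_in separator assms(2) by blast+
    then show "?T B \<subseteq> V"
      by blast
  next
    fix B B' assume B: "B \<in> \<B>" and B': "B' \<in> \<B>" and "B \<noteq> B'"
    consider "B' \<in> \<C>" | "B \<in> \<C>" | "B \<notin> \<C>" "B' \<notin> \<C>" by blast
    then show "\<exists>w\<in>?T B \<union> ?T B'. distinguishes w B B'"
    proof cases
      case 1
      then have "distinguisher V B B' \<in> ?T B"
        using \<open>B \<noteq> B'\<close> by blast
      then show ?thesis
        using separator[OF B B' \<open>B \<noteq> B'\<close>] by blast
    next
      case 2
      then have "distinguisher V B' B \<in> ?T B'"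
        using \<open>B \<noteq> B'\<close> by blast
      then show ?thesis
        using separator[OF B' B] \<open>B \<noteq> B'\<close> unfolding distinguishes_def by blast
    next
      case 3
      then show ?thesis
        using p_dist B B' \<open>B \<noteq> B'\<close> by blast
    qed
  qed
qed

lemma NCTD_le_card_exceptional:
  assumes "finite V" and "\<B> \<subseteq> Pow V" and "\<C> \<subseteq> \<B>"
    and p_in: "\<And>B. B \<in> \<B> \<Longrightarrow> p B \<in> V"
    and p_dist: "\<And>B B'. B \<in> \<B> - \<C> \<Longrightarrow> B' \<in> \<B> - \<C> \<Longrightarrow> B \<noteq> B' \<Longrightarrow>
      distinguishes (p B) B B'"
  shows "NCTD V \<B> \<le> card \<C> + 1"
proof (rule NCTD_le_of_non_clashing)
  show "non_clashing V \<B> (\<lambda>B. insert (p B) (distinguisher V B ` (\<C> - {B})))"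
    using assms(2-) by (rule non_clashing_exceptional)
  show "finite \<B>"
    using assms(1,2) by (meson finite_Pow_iff finite_subset)
  then have "finite \<C>"
    using assms(3) by (rule finite_subset[rotated])
  fix B
  have "card (insert (p B) (distinguisher V B ` (\<C> - {B})))
      \<le> card (distinguisher V B ` (\<C> - {B})) + 1"
    by (simp add: card_insert_le_m1)
  also have "\<dots> \<le> card (\<C> - {B}) + 1"
    using \<open>finite \<C>\<close> by (simp add: card_image_le)
  also have "\<dots> \<le> card \<C> + 1"
    using \<open>finite \<C>\<close> by (simp add: card_Diff1_le)
  finally show "card (insert (p B) (distinguisher V B ` (\<C> - {B}))) \<le> card \<C> + 1" .
qed

lemma closed_nbhd_subset: "closed_nbhd V E v \<subseteq> V" if "v \<in> V"
  using that unfolding closed_nbhd_def by auto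

lemma closed_nbhd_Diff_vertex_cover:
  assumes "vertex_cover V E X" and "v \<notin> X"
  shows "closed_nbhd V E v - X = {v}"
  using assms unfolding closed_nbhd_def vertex_cover_def by auto

lemma distinguishes_closed_nbhd_outside_cover:
  assumes "vertex_cover V E X" and "u \<notin> X" and "v \<notin> X"
    and "closed_nbhd V E u \<noteq> closed_nbhd V E v"
  shows "distinguishes u (closed_nbhd V E u) (closed_nbhd V E v)"
proof -
  have "u \<noteq> v" using assms(4) by blast
  then show ?thesis
    using closed_nbhd_Diff_vertex_cover[OF assms(1)] assms(2,3)
    unfolding distinguishes_def by blast
qed

lemma NCTD_closed_nbhds_le_card_vertex_cover:
  assumes "finite V" and "vertex_cover V E X" and "\<B> \<subseteq> closed_nbhd V E ` V"
  shows "NCTD V \<B> \<le> card X + 1"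
proof -
  let ?N = "closed_nbhd V E"
  let ?\<C> = "\<B> \<inter> ?N ` X"
  have "X \<subseteq> V"
    using assms(2) unfolding vertex_cover_def by blast
  have "\<forall>B\<in>\<B>. \<exists>v. v \<in> V \<and> B = ?N v"
    using assms(3) by blast
  then obtain c where c_in: "\<And>B. B \<in> \<B> \<Longrightarrow> c B \<in> V"
    and c_nbhd: "\<And>B. B \<in> \<B> \<Longrightarrow> B = ?N (c B)"
    by metis
  have "\<B> \<subseteq> Pow V"
    using c_in c_nbhd closed_nbhd_subset by (metis PowI subsetI)
  moreover have c_dist: "distinguishes (c B) B B'"
    if "B \<in> \<B> - ?\<C>" "B' \<in> \<B> - ?\<C>" "B \<noteq> B'" for B B'
  proof -
    have "B \<in> \<B>" "B' \<in> \<B>"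
      using that by blast+
    then have nbhds: "B = ?N (c B)" "B' = ?N (c B')"
      by (simp_all only: c_nbhd[symmetric])
    then have "c B \<notin> X" "c B' \<notin> X"
      using that by (metis Diff_iff IntI image_eqI)+
    with nbhds show ?thesis
      using distinguishes_closed_nbhd_outside_cover[OF assms(2)] \<open>B \<noteq> B'\<close> by metis
  qed
  ultimately have "NCTD V \<B> \<le> card ?\<C> + 1"
    by (intro NCTD_le_card_exceptional[OF assms(1) _ _ c_in c_dist]) auto
  moreover have "card ?\<C> \<le> card (?N ` X)"
    using assms(1) \<open>X \<subseteq> V\<close> by (intro card_mono) (auto intro: finite_subset)
  moreover have "card (?N ` X) \<le> card X"
    using assms(1) \<open>X \<subseteq> V\<close> by (intro card_image_le) (rule finite_subset)
  ultimately show ?thesis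
    by (meson add_le_mono1 le_trans)
qed

theorem lemma3:
  fixes V :: "'a set" and E :: "'a \<Rightarrow> 'a \<Rightarrow> bool" and X :: "'a set" and \<B> :: "'a set set"
  assumes "graph V E"
    and "vertex_cover V E X"
    and "\<B> \<subseteq> closed_nbhd V E ` V"
  shows "NCTD V \<B> \<le> 2 ^ (card X + 1) + card X"
proof -
  have "finite V"
    using assms(1) unfolding graph_def by blast
  then have "NCTD V \<B> \<le> card X + 1"
    using assms(2,3) by (rule NCTD_closed_nbhds_le_card_vertex_cover)
  moreover have "card X + 1 \<le> 2 ^ (card X + 1) + card X"
    by simp
  ultimately show ?thesis
    by (rule le_trans)
qed

end
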